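(* Let $\mathcal H$ be a well-structured preconditioner set and $M\in\mathcal S^d_{++}$. Then $\langle M,H\rangle=\langle P_{\mathcal H}(M)^2,H\rangle$ for every $H\in\mathcal H$, and $P_{\mathcal H}(M+\lambda I_d)^2=P_{\mathcal H}(M)^2+\lambda I_d$ for every $\lambda\ge0$.
   Context: $\mathcal S^d_+$ (resp. $\mathcal S^d_{++}$) denotes the set of real symmetric positive semidefinite (resp. positive definite) $d\times d$ matrices; $\langle A,B\rangle=\operatorname{Tr}(A^\top B)$. A set $\mathcal H\subseteq\mathcal S_+^d$ is a well-structured preconditioner set if $\mathcal H=\mathcal S_+^d\cap\mathcal K$ for some set $\mathcal K$ of real $d\times d$ matrices that is closed under scalar multiplication, matrix addition and matrix multiplication and contains the identity $I_d$. For $M\in\mathcal S^d_{++}$, $P_{\mathcal H}(M):=\arg\min_{H\in\mathcal H\cap\mathcal S^d_{++}}\langle M,H^{-1}\rangle+\operatorname{Tr}(H)$ (the minimizer exists and is unique). *)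

theory Defs
  imports "HOL-Analysis.Analysis"
begin

definition psd_mat :: "real^'n^'n \<Rightarrow> bool" where
  "psd_mat A \<longleftrightarrow> transpose A = A \<and> (\<forall>x. 0 \<le> x \<bullet> (A *v x))"

definition pd_mat :: "real^'n^'n \<Rightarrow> bool" where
  "pd_mat A \<longleftrightarrow> transpose A = A \<and> (\<forall>x. x \<noteq> 0 \<longrightarrow> 0 < x \<bullet> (A *v x))"

definition frob :: "real^'n^'n \<Rightarrow> real^'n^'n \<Rightarrow> real" where
  "frob A B = trace (transpose A ** B)"

definition well_structured :: "(real^'n^'n) set \<Rightarrow> bool" where
  "well_structured \<H> \<longleftrightarrow>
     (\<exists>K :: (real^'n^'n) set.
        (\<forall>c A. A \<in> K \<longrightarrow> c *\<^sub>R A \<in> K) \<and>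
        (\<forall>A\<in>K. \<forall>B\<in>K. A + B \<in> K) \<and>
        (\<forall>A\<in>K. \<forall>B\<in>K. A ** B \<in> K) \<and>
        mat 1 \<in> K \<and>
        \<H> = {A. psd_mat A} \<inter> K)"

definition precond_obj :: "real^'n^'n \<Rightarrow> real^'n^'n \<Rightarrow> real" where
  "precond_obj M H = frob M (matrix_inv H) + trace H"

definition P_H :: "(real^'n^'n) set \<Rightarrow> real^'n^'n \<Rightarrow> real^'n^'n" where
  "P_H \<H> M = (THE H. H \<in> \<H> \<and> pd_mat H \<and>
      (\<forall>G\<in>\<H>. pd_mat G \<longrightarrow> precond_obj M H \<le> precond_obj M G))"

end

theory Submission
  imports Defs
begin

text \<open>
  Let \<open>K\<close> be the matrix algebra with \<open>\<H> = S\<^sub>+ \<inter> K\<close> and \<open>f H = \<langle>M, H\<inverse>\<rangle> + tr H\<close>.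
  On \<open>K \<inter> S\<^sub>+\<^sub>+\<close> the objective dominates both \<open>tr H\<close> and \<open>\<lambda>\<^sub>m\<^sub>i\<^sub>n(M) tr H\<inverse>\<close>, so its sublevel
  sets are compact and it attains its minimum at some \<open>P\<close>. Perturbing \<open>P\<close> to \<open>P + t G\<close> along
  symmetric \<open>G \<in> K\<close> gives the first-order condition \<open>tr G = \<langle>M, P\<inverse> G P\<inverse>\<rangle>\<close>; since \<open>K\<close> is an
  algebra we may take \<open>G = P X P\<close>, which turns it into \<open>\<langle>M, X\<rangle> = \<langle>P\<^sup>2, X\<rangle>\<close> for all symmetric
  \<open>X \<in> K\<close>. Conversely this condition characterises the minimiser: \<open>K\<close> is closed under inversion,
  so the condition applies to \<open>X = H\<inverse>\<close>, and it gives \<open>f H - f P = tr (Y\<^sup>T H Y) \<ge> 0\<close> for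
  \<open>Y = H\<inverse> P - 1\<close>, with equality only if \<open>H = P\<close>.

  Every \<open>H \<in> \<H>\<close> is a symmetric element of \<open>K\<close>. For \<open>R = P\<^sub>\<H>(M + \<lambda> 1)\<close> the
  symmetric element \<open>X = R\<^sup>2 - P\<^sup>2 - \<lambda> 1\<close> of \<open>K\<close> is orthogonal to every symmetric element of \<open>K\<close>,
  in particular to itself, so \<open>X = 0\<close>.
\<close>

section \<open>Matrix arithmetic\<close>

lemma matrix_add_rdistrib: "(A + B) ** C = A ** C + B ** C"
  by (simp add: matrix_matrix_mult_def vec_eq_iff sum.distrib distrib_right)

lemma matrix_diff_ldistrib: "(A :: 'a::ring_1^'n^'m) ** (B - C) = A ** B - A ** C"
  by (simp add: matrix_matrix_mult_def vec_eq_iff sum_subtractf right_diff_distrib)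

lemma matrix_diff_rdistrib: "((A :: 'a::ring_1^'n^'m) - B) ** C = A ** C - B ** C"
  by (simp add: matrix_matrix_mult_def vec_eq_iff sum_subtractf left_diff_distrib)

lemma matrix_mult_scaleR_left: "(c *\<^sub>R (A :: real^'n^'m)) ** B = c *\<^sub>R (A ** B)"
  by (simp add: scalar_matrix_assoc)

lemma matrix_mult_scaleR_right: "(A :: real^'n^'m) ** (c *\<^sub>R B) = c *\<^sub>R (A ** B)"
  by (simp add: matrix_scalar_ac scalar_matrix_assoc)

lemma transpose_add: "transpose (A + B) = transpose A + transpose B"
  by (simp add: transpose_def vec_eq_iff)

lemma transpose_zero: "transpose 0 = 0"
  by (simp add: transpose_def vec_eq_iff)

lemma transpose_diff: "transpose ((A :: 'a::ab_group_add^'n^'m) - B) = transpose A - transpose B"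
  by (simp add: transpose_def vec_eq_iff)

lemma trace_scaleR: "trace (c *\<^sub>R (A :: real^'n^'n)) = c * trace A"
  by (simp add: trace_def sum_distrib_left)

lemma inner_matrix_vector_transpose: "(x::real^'n) \<bullet> (A *v y) = (transpose A *v x) \<bullet> y"
  by (metis dot_lmul_matrix transpose_matrix_vector)

lemma matrix_entry_eq_inner: "(A :: real^'n^'m) $ i $ j = axis i 1 \<bullet> (A *v axis j 1)"
  by (simp add: matrix_vector_mult_basis inner_axis' column_def)

lemma trace_transpose_mult_eq_sum_columns:
  "trace (transpose (Y :: real^'n^'m) ** (H ** Y)) = (\<Sum>j\<in>UNIV. column j Y \<bullet> (H *v column j Y))"
  unfolding trace_def matrix_matrix_mult_def transpose_def column_def inner_vec_def matrix_vector_mult_def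
  by (simp add: sum_distrib_left mult_ac)

lemma continuous_on_matrix_mult_pair:
  "continuous_on S (\<lambda>p :: (real^'n^'m) \<times> (real^'k^'n). fst p ** snd p)"
  unfolding matrix_matrix_mult_def by (intro continuous_on_vec_lambda continuous_intros)

lemma matrix_inv_right: "invertible (A :: 'a::field^'n^'n) \<Longrightarrow> A ** matrix_inv A = mat 1"
  and matrix_inv_left: "invertible (A :: 'a::field^'n^'n) \<Longrightarrow> matrix_inv A ** A = mat 1"
  unfolding invertible_def matrix_inv_def by (metis (mono_tags, lifting) someI_ex)+

lemma matrix_inv_unique:
  assumes "(A :: 'a::field^'n^'n) ** B = mat 1"
  shows "matrix_inv A = B"
proof -
  have "invertible A" using assms invertible_right_inverse by blast
  have "matrix_inv A = matrix_inv A ** (A ** B)" using assms by simp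
  also have "\<dots> = B" by (simp add: matrix_mul_assoc matrix_inv_left \<open>invertible A\<close>)
  finally show ?thesis .
qed

lemma matrix_inv_transpose:
  assumes "invertible (A :: 'a::field^'n^'n)"
  shows "matrix_inv (transpose A) = transpose (matrix_inv A)"
  by (rule matrix_inv_unique)
    (simp add: matrix_inv_left assms flip: matrix_transpose_mul)

lemma matrix_inv_perturbation:
  fixes P G H :: "real^'n^'n"
  assumes "invertible P" "invertible H" "H = P + t *\<^sub>R G"
  shows "matrix_inv H = matrix_inv P - t *\<^sub>R (matrix_inv P ** G ** matrix_inv P)
           + t\<^sup>2 *\<^sub>R (matrix_inv P ** G ** matrix_inv H ** G ** matrix_inv P)"
proof -
  define Pi where "Pi = matrix_inv P"
  define Hi where "Hi = matrix_inv H"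
  have PPi: "P ** Pi = mat 1" "Pi ** P = mat 1"
    unfolding Pi_def using matrix_inv_right matrix_inv_left assms(1) by auto
  have HHi: "H ** Hi = mat 1" "Hi ** H = mat 1"
    unfolding Hi_def using matrix_inv_right matrix_inv_left assms(2) by auto
  have "Pi = (Pi ** H) ** Hi" by (simp add: HHi flip: matrix_mul_assoc)
  also have "\<dots> = Hi + t *\<^sub>R (Pi ** G ** Hi)"
    unfolding assms(3) by (simp add: matrix_add_ldistrib matrix_add_rdistrib matrix_mult_scaleR_right
        matrix_mult_scaleR_left PPi)
  finally have left: "Hi = Pi - t *\<^sub>R (Pi ** G ** Hi)" by (simp add: algebra_simps)
  have "Pi = Hi ** (H ** Pi)" by (simp add: matrix_mul_assoc HHi)
  also have "\<dots> = Hi + t *\<^sub>R (Hi ** G ** Pi)"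
    unfolding assms(3) by (simp add: matrix_add_ldistrib matrix_add_rdistrib matrix_mult_scaleR_right
        matrix_mult_scaleR_left PPi matrix_mul_assoc)
  finally have right: "Hi = Pi - t *\<^sub>R (Hi ** G ** Pi)" by (simp add: algebra_simps)
  have "Pi ** G ** Hi = Pi ** G ** (Pi - t *\<^sub>R (Hi ** G ** Pi))" using right by simp
  also have "\<dots> = Pi ** G ** Pi - t *\<^sub>R (Pi ** G ** Hi ** G ** Pi)"
    by (simp add: matrix_diff_ldistrib matrix_mult_scaleR_right matrix_mul_assoc)
  finally have "Hi = Pi - t *\<^sub>R (Pi ** G ** Pi - t *\<^sub>R (Pi ** G ** Hi ** G ** Pi))"
    using left by simp
  then show ?thesis
    unfolding Hi_def[symmetric] Pi_def[symmetric] by (simp add: algebra_simps power2_eq_square)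
qed

section \<open>Positive definite and semidefinite matrices\<close>

lemma psd_mat_symmetric: "psd_mat A \<Longrightarrow> transpose A = A"
  and pd_mat_symmetric: "pd_mat A \<Longrightarrow> transpose A = A"
  unfolding psd_mat_def pd_mat_def by simp_all

lemma pd_imp_psd_mat: "pd_mat A \<Longrightarrow> psd_mat A"
  unfolding psd_mat_def pd_mat_def by (metis inner_zero_left order_refl less_imp_le)

lemma pd_mat_mat_1: "pd_mat (mat 1)"
  unfolding pd_mat_def by simp

lemma pd_mat_add_scaleR_mat_1:
  assumes "pd_mat M" "0 \<le> c"
  shows "pd_mat (M + c *\<^sub>R mat 1)"
  using assms unfolding pd_mat_def
  by (simp add: transpose_add transpose_scalar matrix_vector_mult_add_rdistrib
      flip: scaleR_matrix_vector_assoc) (simp add: add_pos_nonneg inner_add_right)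

lemma pd_mat_invertible:
  assumes "pd_mat (A :: real^'n^'n)"
  shows "invertible A"
proof -
  have "\<forall>x. A *v x = 0 \<longrightarrow> x = 0"
    using assms unfolding pd_mat_def by (metis inner_zero_right less_irrefl)
  then show ?thesis using matrix_left_invertible_ker invertible_left_inverse by blast
qed

lemma pd_mat_matrix_inv:
  assumes "pd_mat (A :: real^'n^'n)"
  shows "pd_mat (matrix_inv A)"
  unfolding pd_mat_def
proof (intro conjI allI impI)
  have "invertible A" by (rule pd_mat_invertible[OF assms])
  then show "transpose (matrix_inv A) = matrix_inv A"
    by (metis matrix_inv_transpose pd_mat_symmetric assms)
  fix x :: "real^'n" assume "x \<noteq> 0"
  define y where "y = matrix_inv A *v x"
  have "x = A *v y"
    unfolding y_def by (simp add: matrix_vector_mul_assoc matrix_inv_right \<open>invertible A\<close>)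
  then have "y \<noteq> 0" using \<open>x \<noteq> 0\<close> by auto
  then show "0 < x \<bullet> (matrix_inv A *v x)"
    using assms \<open>x = A *v y\<close> unfolding pd_mat_def y_def by (metis inner_commute)
qed

lemma psd_mat_diag_nonneg: "psd_mat A \<Longrightarrow> 0 \<le> A $ i $ i"
  unfolding psd_mat_def matrix_entry_eq_inner by blast

lemma psd_mat_trace_nonneg: "psd_mat A \<Longrightarrow> 0 \<le> trace A"
  unfolding trace_def by (simp add: psd_mat_diag_nonneg sum_nonneg)

lemma quadratic_nonneg_imp_discriminant_le:
  fixes a b c :: real
  assumes "0 \<le> c" and nonneg: "\<And>t. 0 \<le> a + 2 * b * t + c * t\<^sup>2"
  shows "b\<^sup>2 \<le> a * c"
proof (cases "c = 0")
  case True
  have "b = 0"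
  proof (rule ccontr)
    assume "b \<noteq> 0"
    have "0 \<le> a + 2 * b * (- (a + 1) / (2 * b))" using nonneg[of "- (a + 1) / (2 * b)"] True by simp
    also have "\<dots> = -1" using \<open>b \<noteq> 0\<close> by (simp add: field_simps)
    finally show False by simp
  qed
  then show ?thesis using True by simp
next
  case False
  then have "0 < c" using \<open>0 \<le> c\<close> by simp
  have "0 \<le> a + 2 * b * (- b / c) + c * (- b / c)\<^sup>2" by (rule nonneg)
  also have "\<dots> = (a * c - b\<^sup>2) / c" using \<open>0 < c\<close> by (simp add: field_simps power2_eq_square)
  finally show ?thesis using \<open>0 < c\<close> by (simp add: zero_le_divide_iff)
qed

lemma psd_mat_cauchy_schwarz:
  assumes "psd_mat (A :: real^'n^'n)"
  shows "(x \<bullet> (A *v y))\<^sup>2 \<le> (x \<bullet> (A *v x)) * (y \<bullet> (A *v y))"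
proof (rule quadratic_nonneg_imp_discriminant_le)
  show "0 \<le> y \<bullet> (A *v y)" using assms unfolding psd_mat_def by blast
  have "y \<bullet> (A *v x) = x \<bullet> (A *v y)"
    by (metis inner_commute inner_matrix_vector_transpose psd_mat_symmetric assms)
  then have "(x + t *\<^sub>R y) \<bullet> (A *v (x + t *\<^sub>R y))
      = x \<bullet> (A *v x) + 2 * (x \<bullet> (A *v y)) * t + (y \<bullet> (A *v y)) * t\<^sup>2" for t
    by (simp add: algebra_simps inner_add_left inner_add_right power2_eq_square)
  then show "0 \<le> x \<bullet> (A *v x) + 2 * (x \<bullet> (A *v y)) * t + (y \<bullet> (A *v y)) * t\<^sup>2" for t
    using assms unfolding psd_mat_def by metis
qed

lemma psd_mat_entry_sq_le: "psd_mat A \<Longrightarrow> (A $ i $ j)\<^sup>2 \<le> A $ i $ i * A $ j $ j"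
  unfolding matrix_entry_eq_inner by (rule psd_mat_cauchy_schwarz)

lemma psd_mat_diag_eq_0:
  assumes "psd_mat A" "A $ j $ j = 0"
  shows "A $ i $ j = 0" "A $ j $ i = 0"
  using psd_mat_entry_sq_le[OF assms(1), of i j] psd_mat_entry_sq_le[OF assms(1), of j i] assms(2)
  by simp_all

lemma psd_invertible_imp_pd_mat:
  assumes "psd_mat (A :: real^'n^'n)" "invertible A"
  shows "pd_mat A"
  unfolding pd_mat_def
proof (intro conjI allI impI)
  show "transpose A = A" by (rule psd_mat_symmetric[OF assms(1)])
  fix x :: "real^'n" assume "x \<noteq> 0"
  then have "A *v x \<noteq> 0"
    using inj_matrix_vector_mult[OF assms(2)] by (metis injD matrix_vector_mult_0_right)
  then have "((A *v x) \<bullet> (A *v x))\<^sup>2 > 0" by simp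
  then have "x \<bullet> (A *v x) \<noteq> 0"
    using psd_mat_cauchy_schwarz[OF assms(1), of "A *v x" x] by auto
  then show "0 < x \<bullet> (A *v x)" using assms(1) unfolding psd_mat_def by (metis order_le_less)
qed

lemma psd_mat_congruence:
  assumes "psd_mat (M :: real^'n^'n)"
  shows "psd_mat (transpose B ** M ** B)"
  unfolding psd_mat_def
proof (intro conjI allI)
  show "transpose (transpose B ** M ** B) = transpose B ** M ** B"
    by (simp add: matrix_transpose_mul psd_mat_symmetric[OF assms] matrix_mul_assoc)
  have "x \<bullet> ((transpose B ** M ** B) *v x) = (B *v x) \<bullet> (M *v (B *v x))" for x
    by (simp only: matrix_vector_mul_assoc[symmetric] inner_matrix_vector_transpose transpose_transpose)
  then show "0 \<le> x \<bullet> ((transpose B ** M ** B) *v x)" for x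
    using assms unfolding psd_mat_def by simp
qed

definition outer_prod :: "real^'n \<Rightarrow> real^'n^'n" where
  "outer_prod v = (\<chi> i j. v $ i * v $ j)"

lemma outer_prod_mult_vector: "outer_prod v *v x = (v \<bullet> x) *\<^sub>R v"
  unfolding outer_prod_def matrix_vector_mult_def inner_vec_def
  by (simp add: vec_eq_iff sum_distrib_left mult_ac)

lemma trace_outer_prod_mult: "trace (outer_prod v ** B) = v \<bullet> (B *v v)"
  unfolding trace_def matrix_matrix_mult_def outer_prod_def inner_vec_def matrix_vector_mult_def
  by (simp add: sum_distrib_left mult_ac) (subst sum.swap, simp add: mult_ac)

lemma transpose_outer_prod: "transpose (outer_prod v) = outer_prod v"
  by (simp add: outer_prod_def transpose_def vec_eq_iff mult.commute)

text \<open>With \<open>v = A e\<^sub>i / \<surd>A\<^sub>i\<^sub>i\<close>, \<open>A - v v\<^sup>T\<close> is the Schur complement of the pivot \<open>A\<^sub>i\<^sub>i\<close>: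
  it stays positive semidefinite by Cauchy-Schwarz for the form of \<open>A\<close>, and clears the \<open>i\<close>-th
  diagonal entry.\<close>
lemma psd_mat_split_outer_prod:
  assumes A: "psd_mat (A :: real^'n^'n)" and "A $ i $ i \<noteq> 0"
  obtains v where "psd_mat (A - outer_prod v)"
    and "{j. (A - outer_prod v) $ j $ j \<noteq> 0} \<subset> {j. A $ j $ j \<noteq> 0}"
proof
  define a where "a = A $ i $ i"
  have "0 < a" using psd_mat_diag_nonneg[OF A, of i] \<open>A $ i $ i \<noteq> 0\<close> unfolding a_def by simp
  define v where "v = (1 / sqrt a) *\<^sub>R (A *v axis i 1)"
  have v_entry: "v $ j = A $ j $ i / sqrt a" for j
    unfolding v_def by (simp add: matrix_vector_mult_basis column_def)
  have v_inner: "(v \<bullet> x)\<^sup>2 = (x \<bullet> (A *v axis i 1))\<^sup>2 / a" for x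
    using \<open>0 < a\<close> unfolding v_def by (simp add: inner_commute power_divide)
  show "psd_mat (A - outer_prod v)"
    unfolding psd_mat_def
  proof (intro conjI allI)
    show "transpose (A - outer_prod v) = A - outer_prod v"
      using A by (simp add: transpose_diff psd_mat_symmetric transpose_outer_prod)
    have "(x \<bullet> (A *v axis i 1))\<^sup>2 \<le> (x \<bullet> (A *v x)) * a" for x
      using psd_mat_cauchy_schwarz[OF A, of x "axis i 1"] by (simp add: a_def matrix_entry_eq_inner)
    moreover have "x \<bullet> ((A - outer_prod v) *v x) = x \<bullet> (A *v x) - (v \<bullet> x)\<^sup>2" for x
      by (simp add: matrix_vector_mult_diff_rdistrib inner_diff_right outer_prod_mult_vector
          inner_commute power2_eq_square)
    ultimately show "0 \<le> x \<bullet> ((A - outer_prod v) *v x)" for x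
      using \<open>0 < a\<close> by (simp add: v_inner pos_divide_le_eq mult.commute)
  qed
  have diag: "(A - outer_prod v) $ j $ j = A $ j $ j - (A $ j $ i)\<^sup>2 / a" for j
    using \<open>0 < a\<close> by (simp add: outer_prod_def v_entry power2_eq_square)
  have "(A - outer_prod v) $ i $ i = 0" using \<open>0 < a\<close> unfolding diag by (simp add: a_def power2_eq_square)
  moreover have "A $ j $ i = 0" if "A $ j $ j = 0" for j using psd_mat_diag_eq_0(2)[OF A that] .
  ultimately show "{j. (A - outer_prod v) $ j $ j \<noteq> 0} \<subset> {j. A $ j $ j \<noteq> 0}"
    using \<open>A $ i $ i \<noteq> 0\<close> diag by auto
qed

lemma psd_mat_eq_sum_outer_prod:
  assumes "psd_mat (A :: real^'n^'n)"
  obtains vs where "A = (\<Sum>v\<leftarrow>vs. outer_prod v)"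
  using assms
proof (induction "card {j. A $ j $ j \<noteq> 0}" arbitrary: A thesis rule: less_induct)
  case less
  show ?case
  proof (cases "\<exists>i. A $ i $ i \<noteq> 0")
    case False
    then have "A = 0" using psd_mat_diag_eq_0(1)[OF less.prems(2)] by (simp add: vec_eq_iff)
    then show ?thesis using less.prems(1)[of "[]"] by simp
  next
    case True
    then obtain i where "A $ i $ i \<noteq> 0" by blast
    then obtain v where psd: "psd_mat (A - outer_prod v)"
      and sub: "{j. (A - outer_prod v) $ j $ j \<noteq> 0} \<subset> {j. A $ j $ j \<noteq> 0}"
      using psd_mat_split_outer_prod less.prems(2) by blast
    obtain vs where "A - outer_prod v = (\<Sum>v\<leftarrow>vs. outer_prod v)"
      using less.hyps[OF psubset_card_mono[OF finite sub] _ psd] by blast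
    then show ?thesis using less.prems(1)[of "v # vs"] by (simp add: algebra_simps)
  qed
qed

lemma psd_trace_mult_nonneg:
  assumes "psd_mat (A :: real^'n^'n)" "psd_mat B"
  shows "0 \<le> trace (A ** B)"
proof -
  obtain vs where A: "A = (\<Sum>v\<leftarrow>vs. outer_prod v)"
    using psd_mat_eq_sum_outer_prod[OF assms(1)] .
  have "0 \<le> trace ((\<Sum>v\<leftarrow>ws. outer_prod v) ** B)" for ws
    using assms(2) unfolding psd_mat_def
    by (induction ws) (simp_all add: matrix_add_rdistrib trace_add trace_outer_prod_mult trace_0[unfolded mat_0])
  then show ?thesis unfolding A .
qed

lemma pd_trace_congruence_nonneg:
  assumes "pd_mat (H :: real^'n^'n)"
  shows "0 \<le> trace (transpose Y ** (H ** Y))"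
  unfolding trace_transpose_mult_eq_sum_columns
  using pd_imp_psd_mat[OF assms] unfolding psd_mat_def by (simp add: sum_nonneg)

lemma pd_trace_congruence_eq_0:
  assumes "pd_mat (H :: real^'n^'n)" "trace (transpose Y ** (H ** Y)) = 0"
  shows "Y = 0"
proof -
  have nonneg: "0 \<le> column j Y \<bullet> (H *v column j Y)" for j
    using pd_imp_psd_mat[OF assms(1)] unfolding psd_mat_def by blast
  have "column j Y \<bullet> (H *v column j Y) = 0" for j
    using assms(2) nonneg sum_nonneg_eq_0_iff[of UNIV "\<lambda>j. column j Y \<bullet> (H *v column j Y)"]
    unfolding trace_transpose_mult_eq_sum_columns by simp
  then have "column j Y = 0" for j
    using assms(1) unfolding pd_mat_def by (metis less_irrefl)
  then show "Y = 0" by (simp add: column_def vec_eq_iff)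
qed

lemma symmetric_trace_square_eq_0:
  assumes "transpose (X :: real^'n^'n) = X" "trace (X ** X) = 0"
  shows "X = 0"
  using pd_trace_congruence_eq_0[OF pd_mat_mat_1, of X] assms by simp

lemma trace_mult_ge_lower_bound:
  assumes "transpose M = M" "\<forall>x. m * (x \<bullet> x) \<le> x \<bullet> (M *v x)" "psd_mat W"
  shows "m * trace W \<le> trace (M ** W)"
proof -
  have "psd_mat (M - m *\<^sub>R mat 1)"
    using assms(1,2) unfolding psd_mat_def
    by (simp add: transpose_diff transpose_scalar matrix_vector_mult_diff_rdistrib inner_diff_right
        flip: scaleR_matrix_vector_assoc)
  then have "0 \<le> trace ((M - m *\<^sub>R mat 1) ** W)" using psd_trace_mult_nonneg assms(3) by blast
  then show ?thesis by (simp add: matrix_diff_rdistrib matrix_mult_scaleR_left trace_sub trace_scaleR)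
qed

lemma pd_mat_quadratic_form_lower_bound:
  assumes "pd_mat (A :: real^'n^'n)"
  obtains m where "0 < m" "\<forall>x. m * (x \<bullet> x) \<le> x \<bullet> (A *v x)"
proof -
  have cont: "continuous_on (sphere 0 1) (\<lambda>x::real^'n. x \<bullet> (A *v x))"
    by (intro continuous_intros linear_continuous_on linear_linear[THEN iffD1] matrix_vector_mul_linear)
  have "(axis undefined 1 :: real^'n) \<in> sphere 0 1" by simp
  then obtain x0 where x0: "x0 \<in> sphere 0 1" "\<forall>y\<in>sphere 0 1. x0 \<bullet> (A *v x0) \<le> y \<bullet> (A *v y)"
    using continuous_attains_inf[OF compact_sphere _ cont] by blast
  define m where "m = x0 \<bullet> (A *v x0)"
  have "x0 \<noteq> 0" using x0(1) by auto
  then have "0 < m" using assms unfolding pd_mat_def m_def by blast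
  have "m * (x \<bullet> x) \<le> x \<bullet> (A *v x)" if "x \<noteq> 0" for x
  proof -
    define u where "u = (1 / norm x) *\<^sub>R x"
    have "u \<in> sphere 0 1" "x = norm x *\<^sub>R u" unfolding u_def using that by simp_all
    then have "norm x ^ 2 * m \<le> norm x ^ 2 * (u \<bullet> (A *v u))"
      using x0(2) unfolding m_def by (simp add: mult_left_mono)
    also have "\<dots> = x \<bullet> (A *v x)"
      by (subst (2 3) \<open>x = norm x *\<^sub>R u\<close>) (simp add: matrix_vector_mult_scaleR power2_eq_square)
    finally show ?thesis by (simp add: power2_norm_eq_inner mult.commute)
  qed
  then show ?thesis using that \<open>0 < m\<close> by (metis inner_zero_left matrix_vector_mult_0_right mult_zero_right order_refl)
qed

lemma matrix_quadratic_form_bound: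
  obtains B where "0 \<le> B" "\<forall>x. \<bar>x \<bullet> ((G :: real^'n^'n) *v x)\<bar> \<le> B * (x \<bullet> x)"
proof -
  obtain K where K: "\<forall>x. norm (G *v x) \<le> norm x * K"
    using bounded_linear.bounded matrix_vector_mul_bounded_linear by blast
  have "\<bar>x \<bullet> (G *v x)\<bar> \<le> max K 0 * (x \<bullet> x)" for x
  proof -
    have "\<bar>x \<bullet> (G *v x)\<bar> \<le> norm x * norm (G *v x)" by (rule Cauchy_Schwarz_ineq2)
    also have "\<dots> \<le> norm x * (norm x * max K 0)"
      using K[rule_format, of x] by (metis max.cobounded1 mult_left_mono norm_ge_zero order_trans)
    finally show ?thesis by (simp add: power2_norm_eq_inner[symmetric] power2_eq_square mult_ac)
  qed
  then show ?thesis using that[of "max K 0"] by simp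
qed

lemma pd_mat_of_lower_bound:
  assumes "transpose H = H" "0 < c" "\<forall>x. c * (x \<bullet> x) \<le> x \<bullet> (H *v x)"
  shows "pd_mat H"
  unfolding pd_mat_def using assms by (metis inner_gt_zero_iff mult_pos_pos order_less_le_trans)

lemma quadratic_form_perturbation_lower_bound:
  fixes P G :: "real^'n^'n"
  assumes "\<forall>x. a * (x \<bullet> x) \<le> x \<bullet> (P *v x)" "\<forall>x. \<bar>x \<bullet> (G *v x)\<bar> \<le> B * (x \<bullet> x)"
    and "\<bar>t\<bar> * B \<le> a - c"
  shows "c * (x \<bullet> x) \<le> x \<bullet> ((P + t *\<^sub>R G) *v x)"
proof -
  have "\<bar>t * (x \<bullet> (G *v x))\<bar> \<le> \<bar>t\<bar> * B * (x \<bullet> x)"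
    using assms(2) by (simp add: abs_mult mult.assoc mult_left_mono)
  also have "\<dots> \<le> (a - c) * (x \<bullet> x)" by (rule mult_right_mono[OF assms(3) inner_ge_zero])
  moreover have "x \<bullet> ((P + t *\<^sub>R G) *v x) = x \<bullet> (P *v x) + t * (x \<bullet> (G *v x))"
    by (simp add: matrix_vector_mult_add_rdistrib inner_add_right flip: scaleR_matrix_vector_assoc)
  ultimately show ?thesis
    using assms(1)[rule_format, of x] abs_ge_minus_self[of "t * (x \<bullet> (G *v x))"]
    by (simp add: algebra_simps)
qed

lemma pd_inverse_le_bound:
  assumes "pd_mat (H :: real^'n^'n)" "0 < c" "\<forall>x. c * (x \<bullet> x) \<le> x \<bullet> (H *v x)"
  shows "psd_mat ((1 / c) *\<^sub>R mat 1 - matrix_inv H)"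
  unfolding psd_mat_def
proof (intro conjI allI)
  have "invertible H" using pd_mat_invertible[OF assms(1)] .
  show "transpose ((1 / c) *\<^sub>R mat 1 - matrix_inv H) = (1 / c) *\<^sub>R mat 1 - matrix_inv H"
    using pd_mat_symmetric[OF pd_mat_matrix_inv[OF assms(1)]] by (simp add: transpose_diff transpose_scalar)
  fix y :: "real^'n"
  define z where "z = matrix_inv H *v y"
  have "y = H *v z"
    unfolding z_def by (simp add: matrix_vector_mul_assoc matrix_inv_right \<open>invertible H\<close>)
  have q: "y \<bullet> (matrix_inv H *v y) = z \<bullet> y" unfolding z_def by (simp add: inner_commute)
  have "c * norm z ^ 2 \<le> z \<bullet> y"
    using assms(3) \<open>y = H *v z\<close> by (simp add: power2_norm_eq_inner)
  also have "\<dots> \<le> norm z * norm y" by (rule Cauchy_Schwarz_ineq2[THEN abs_le_D1])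
  finally have "c * norm z \<le> norm y"
    by (cases "z = 0") (simp_all add: power2_eq_square mult.assoc mult_le_cancel_right_pos)
  have "c * (z \<bullet> y) \<le> c * norm z * norm y"
    using Cauchy_Schwarz_ineq2[THEN abs_le_D1, of z y] assms(2) by (simp add: mult.assoc)
  also have "\<dots> \<le> norm y * norm y" by (rule mult_right_mono[OF _ norm_ge_zero]) fact
  finally have "z \<bullet> y \<le> (y \<bullet> y) / c"
    using assms(2) by (simp add: pos_le_divide_eq mult.commute flip: power2_norm_eq_inner power2_eq_square)
  then show "0 \<le> y \<bullet> (((1 / c) *\<^sub>R mat 1 - matrix_inv H) *v y)"
    by (simp add: matrix_vector_mult_diff_rdistrib inner_diff_right q flip: scaleR_matrix_vector_assoc)
qed

lemma psd_mat_norm_le_trace: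
  assumes "psd_mat (A :: real^'n^'n)"
  shows "norm A \<le> real CARD('n) * real CARD('n) * trace A"
proof -
  have diag_le: "A $ k $ k \<le> trace A" for k
    unfolding trace_def using psd_mat_diag_nonneg[OF assms] by (intro member_le_sum) auto
  have "(A $ i $ j)\<^sup>2 \<le> (trace A)\<^sup>2" for i j
  proof -
    have "(A $ i $ j)\<^sup>2 \<le> A $ i $ i * A $ j $ j" by (rule psd_mat_entry_sq_le[OF assms])
    also have "\<dots> \<le> trace A * trace A"
      using diag_le psd_mat_diag_nonneg[OF assms] by (intro mult_mono) (auto intro: order_trans)
    finally show ?thesis by (simp add: power2_eq_square)
  qed
  moreover have "0 \<le> trace A" by (rule psd_mat_trace_nonneg[OF assms])
  ultimately have entry_le: "\<bar>A $ i $ j\<bar> \<le> trace A" for i j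
    by (metis abs_le_square_iff abs_of_nonneg)
  have "norm A \<le> (\<Sum>i\<in>UNIV. norm (A $ i))" unfolding norm_vec_def by (rule L2_set_le_sum) simp
  also have "\<dots> \<le> (\<Sum>i\<in>UNIV. \<Sum>j\<in>UNIV. \<bar>A $ i $ j\<bar>)" by (intro sum_mono) (simp add: norm_le_l1_cart)
  also have "\<dots> \<le> (\<Sum>i\<in>(UNIV::'n set). \<Sum>j\<in>(UNIV::'n set). trace A)" by (intro sum_mono entry_le)
  finally show ?thesis by simp
qed

lemma closed_psd_mat: "closed {A :: real^'n^'n. psd_mat A}"
proof -
  have "{A :: real^'n^'n. psd_mat A} = {A. transpose A = A} \<inter> (\<Inter>x. {A. 0 \<le> x \<bullet> (A *v x)})"
    unfolding psd_mat_def by auto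
  also have "closed \<dots>"
    unfolding transpose_def matrix_vector_mult_def inner_vec_def
    by (intro closed_Int closed_INT ballI closed_Collect_eq closed_Collect_le continuous_on_vec_lambda
        continuous_intros)
  finally show ?thesis .
qed

lemma compact_psd_mat_trace_le: "compact {A :: real^'n^'n. psd_mat A \<and> trace A \<le> c}"
  unfolding compact_eq_bounded_closed
proof
  have "norm A \<le> real CARD('n) * real CARD('n) * c" if "psd_mat A" "trace A \<le> c" for A :: "real^'n^'n"
    using psd_mat_norm_le_trace[OF that(1)] that(2) by (meson mult_left_mono of_nat_0_le_iff
        mult_nonneg_nonneg order_trans)
  then show "bounded {A :: real^'n^'n. psd_mat A \<and> trace A \<le> c}"
    unfolding bounded_iff by blast
  have "closed {A :: real^'n^'n. trace A \<le> c}"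
    unfolding trace_def by (intro closed_Collect_le continuous_intros)
  then show "closed {A :: real^'n^'n. psd_mat A \<and> trace A \<le> c}"
    unfolding Collect_conj_eq by (intro closed_Int closed_psd_mat)
qed

section \<open>The preconditioner objective\<close>

lemma precond_obj_eq_trace:
  "transpose M = M \<Longrightarrow> precond_obj M H = trace (M ** matrix_inv H) + trace H"
  unfolding precond_obj_def frob_def by simp

lemma precond_obj_sublevel_trace_le:
  assumes M: "pd_mat M" "\<forall>x. m * (x \<bullet> x) \<le> x \<bullet> (M *v x)"
    and H: "pd_mat H" "precond_obj M H \<le> c"
  shows "trace H \<le> c" "m * trace (matrix_inv H) \<le> c"
proof -
  have "psd_mat (matrix_inv H)" by (rule pd_imp_psd_mat[OF pd_mat_matrix_inv[OF H(1)]])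
  then have "0 \<le> trace (M ** matrix_inv H)" "m * trace (matrix_inv H) \<le> trace (M ** matrix_inv H)"
    using psd_trace_mult_nonneg pd_imp_psd_mat[OF M(1)] trace_mult_ge_lower_bound
      pd_mat_symmetric[OF M(1)] M(2) by blast+
  moreover have "0 \<le> trace H" by (rule psd_mat_trace_nonneg[OF pd_imp_psd_mat[OF H(1)]])
  ultimately show "trace H \<le> c" "m * trace (matrix_inv H) \<le> c"
    using H(2) unfolding precond_obj_eq_trace[OF pd_mat_symmetric[OF M(1)]] by linarith+
qed

lemma precond_obj_perturbation:
  fixes M P G :: "real^'n^'n"
  assumes M: "transpose M = M" and P: "pd_mat P" and G: "transpose G = G"
    and H: "H = P + t *\<^sub>R G" "invertible H"
  defines "A \<equiv> transpose (matrix_inv P ** G) ** M ** (matrix_inv P ** G)"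
  shows "precond_obj M H = precond_obj M P + t * (trace G - trace (M ** matrix_inv P ** G ** matrix_inv P))
      + t\<^sup>2 * trace (A ** matrix_inv H)"
proof -
  define Pi where "Pi = matrix_inv P"
  define Hi where "Hi = matrix_inv H"
  have Hi_eq: "Hi = Pi - t *\<^sub>R (Pi ** G ** Pi) + t\<^sup>2 *\<^sub>R (Pi ** G ** Hi ** G ** Pi)"
    unfolding Pi_def Hi_def by (rule matrix_inv_perturbation[OF pd_mat_invertible[OF P] H(2,1)])
  have "transpose Pi = Pi" unfolding Pi_def by (rule pd_mat_symmetric[OF pd_mat_matrix_inv[OF P]])
  then have "A = G ** Pi ** M ** Pi ** G"
    unfolding A_def Pi_def[symmetric] by (simp add: matrix_transpose_mul G matrix_mul_assoc)
  then have remainder: "trace (M ** (Pi ** G ** Hi ** G ** Pi)) = trace (A ** Hi)"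
    by (metis matrix_mul_assoc trace_mul_sym)
  have "M ** Hi = M ** Pi - t *\<^sub>R (M ** (Pi ** G ** Pi)) + t\<^sup>2 *\<^sub>R (M ** (Pi ** G ** Hi ** G ** Pi))"
    by (subst Hi_eq) (simp add: matrix_add_ldistrib matrix_diff_ldistrib matrix_mult_scaleR_right)
  then have "trace (M ** Hi) = trace (M ** Pi) - t * trace (M ** Pi ** G ** Pi) + t\<^sup>2 * trace (A ** Hi)"
    using remainder by (simp add: trace_add trace_sub trace_scaleR matrix_mul_assoc)
  moreover have "trace H = trace P + t * trace G" unfolding H(1) by (simp add: trace_add trace_scaleR)
  ultimately show ?thesis
    unfolding precond_obj_eq_trace[OF M] Pi_def[symmetric] Hi_def[symmetric] by (simp add: algebra_simps)
qed

lemma precond_obj_perturbation_le: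
  fixes M P G :: "real^'n^'n"
  assumes M: "pd_mat M" and P: "pd_mat P" and G: "transpose G = G"
    and H: "H = P + t *\<^sub>R G" "pd_mat H" "0 < c" "\<forall>x. c * (x \<bullet> x) \<le> x \<bullet> (H *v x)"
  defines "A \<equiv> transpose (matrix_inv P ** G) ** M ** (matrix_inv P ** G)"
  shows "precond_obj M H \<le> precond_obj M P + t * (trace G - trace (M ** matrix_inv P ** G ** matrix_inv P))
      + t\<^sup>2 * (trace A / c)"
proof -
  have "psd_mat ((1 / c) *\<^sub>R mat 1 - matrix_inv H)"
    by (rule pd_inverse_le_bound[OF H(2-4)])
  then have "0 \<le> trace (A ** ((1 / c) *\<^sub>R mat 1 - matrix_inv H))"
    unfolding A_def by (rule psd_trace_mult_nonneg[OF psd_mat_congruence[OF pd_imp_psd_mat[OF M]]])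
  then have "trace (A ** matrix_inv H) \<le> trace A / c"
    by (simp add: matrix_diff_ldistrib matrix_mult_scaleR_right trace_sub trace_scaleR)
  then have "t\<^sup>2 * trace (A ** matrix_inv H) \<le> t\<^sup>2 * (trace A / c)"
    by (rule mult_left_mono) simp_all
  then show ?thesis
    using precond_obj_perturbation[OF pd_mat_symmetric[OF M] P G H(1) pd_mat_invertible[OF H(2)],
        folded A_def]
    by linarith
qed

lemma quadratic_lower_bound_imp_linear_coeff_eq_0:
  fixes D B \<delta> :: real
  assumes "0 < \<delta>" "0 \<le> B" "\<And>t. \<bar>t\<bar> \<le> \<delta> \<Longrightarrow> 0 \<le> t * D + t\<^sup>2 * B"
  shows "D = 0"
proof -
  have "\<bar>D\<bar> \<le> 0 + e" if "0 < e" for e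
  proof -
    define t where "t = min \<delta> (e / (B + 1))"
    have "0 < t" "t \<le> \<delta>" unfolding t_def using assms(1,2) that by auto
    have "0 \<le> t * (D + t * B)" "0 \<le> t * (- D + t * B)"
      using assms(3)[of t] assms(3)[of "- t"] \<open>0 < t\<close> \<open>t \<le> \<delta>\<close>
      by (simp_all add: power2_eq_square algebra_simps)
    then have "\<bar>D\<bar> \<le> t * B" using \<open>0 < t\<close> by (simp add: zero_le_mult_iff abs_le_iff)
    also have "\<dots> \<le> e / (B + 1) * B" unfolding t_def by (rule mult_right_mono[OF min.cobounded2 assms(2)])
    also have "\<dots> \<le> e" using assms(2) that by (simp add: field_simps)
    finally show ?thesis by simp
  qed
  then show ?thesis by (metis abs_le_zero_iff field_le_epsilon)
qed

section \<open>Matrix algebras and the first-order condition\<close>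

definition matrix_algebra :: "(real^'n^'n) set \<Rightarrow> bool" where
  "matrix_algebra K \<longleftrightarrow>
     (\<forall>c A. A \<in> K \<longrightarrow> c *\<^sub>R A \<in> K) \<and>
     (\<forall>A\<in>K. \<forall>B\<in>K. A + B \<in> K) \<and>
     (\<forall>A\<in>K. \<forall>B\<in>K. A ** B \<in> K) \<and>
     mat 1 \<in> K"

definition symmetric_elements :: "(real^'n^'n) set \<Rightarrow> (real^'n^'n) set" where
  "symmetric_elements K = {X \<in> K. transpose X = X}"

lemma well_structured_iff_matrix_algebra:
  "well_structured \<H> \<longleftrightarrow> (\<exists>K. matrix_algebra K \<and> \<H> = {A. psd_mat A} \<inter> K)"
  unfolding well_structured_def matrix_algebra_def by blast

text \<open>The first-order condition for the objective at \<open>P\<close>: the directional derivative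
  \<open>tr G - \<langle>M, P\<inverse> G P\<inverse>\<rangle>\<close> along symmetric \<open>G \<in> K\<close> vanishes, written with \<open>G = P X P\<close>.\<close>
definition precond_stationary :: "(real^'n^'n) set \<Rightarrow> real^'n^'n \<Rightarrow> real^'n^'n \<Rightarrow> bool" where
  "precond_stationary K M P \<longleftrightarrow> (\<forall>X\<in>symmetric_elements K. trace (M ** X) = trace (P ** P ** X))"

context
  fixes K :: "(real^'n^'n) set"
  assumes K: "matrix_algebra K"
begin

lemma matrix_algebra_scaleR: "A \<in> K \<Longrightarrow> c *\<^sub>R A \<in> K"
  and matrix_algebra_add: "A \<in> K \<Longrightarrow> B \<in> K \<Longrightarrow> A + B \<in> K"
  and matrix_algebra_mult: "A \<in> K \<Longrightarrow> B \<in> K \<Longrightarrow> A ** B \<in> K"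
  and matrix_algebra_one: "mat 1 \<in> K"
  using K unfolding matrix_algebra_def by blast+

lemma matrix_algebra_subspace: "subspace K"
  unfolding subspace_def by (metis matrix_algebra_add matrix_algebra_one matrix_algebra_scaleR scaleR_zero_left)

lemma matrix_algebra_diff: "A \<in> K \<Longrightarrow> B \<in> K \<Longrightarrow> A - B \<in> K"
  using matrix_algebra_subspace subspace_diff by blast

text \<open>Left multiplication by an invertible \<open>H \<in> K\<close> is an injective linear map of the
  finite-dimensional space \<open>K\<close> into itself, hence onto; so \<open>mat 1\<close> has a preimage in \<open>K\<close>.\<close>
lemma matrix_algebra_matrix_inv:
  assumes "H \<in> K" "invertible H"
  shows "matrix_inv H \<in> K"
proof -
  have lin: "linear ((**) H)"
    by (rule linearI) (simp_all add: matrix_add_ldistrib matrix_mult_scaleR_right)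
  have "inj ((**) H)"
    by (rule injI) (metis matrix_mul_assoc matrix_inv_left[OF assms(2)] matrix_mul_lid)
  then have "inj_on ((**) H) (span K)" by (rule inj_on_subset) simp
  then have "dim ((**) H ` K) = dim K" by (rule dim_image_eq[OF lin])
  moreover have "(**) H ` K \<subseteq> K" using matrix_algebra_mult[OF assms(1)] by blast
  ultimately have "(**) H ` K = K"
    using subspace_dim_equal[OF linear_subspace_image[OF lin matrix_algebra_subspace] matrix_algebra_subspace]
    by simp
  then obtain X where "X \<in> K" "H ** X = mat 1" using matrix_algebra_one by (metis imageE)
  then show ?thesis using matrix_inv_unique by metis
qed

lemma closed_symmetric_elements: "closed (symmetric_elements K)"
proof (rule closed_subspace)
  show "subspace (symmetric_elements K)"
    using matrix_algebra_subspace unfolding subspace_def symmetric_elements_def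
    by (auto simp: transpose_add transpose_scalar transpose_zero)
qed

lemma pd_matrix_inv_symmetric_elements:
  assumes "H \<in> K" "pd_mat H"
  shows "matrix_inv H \<in> symmetric_elements K"
  unfolding symmetric_elements_def
  using matrix_algebra_matrix_inv[OF assms(1) pd_mat_invertible[OF assms(2)]]
    pd_mat_symmetric[OF pd_mat_matrix_inv[OF assms(2)]] by simp

lemma precond_obj_diff_eq:
  assumes M: "pd_mat M" and P: "P \<in> K" "pd_mat P" "precond_stationary K M P"
    and H: "H \<in> K" "pd_mat H"
  defines "Y \<equiv> matrix_inv H ** P - mat 1"
  shows "precond_obj M H - precond_obj M P = trace (transpose Y ** (H ** Y))"
proof -
  define Hi where "Hi = matrix_inv H"
  have HHi: "H ** Hi = mat 1" "Hi ** H = mat 1"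
    unfolding Hi_def using matrix_inv_right matrix_inv_left pd_mat_invertible[OF H(2)] by auto
  have PPi: "P ** matrix_inv P = mat 1" by (rule matrix_inv_right[OF pd_mat_invertible[OF P(2)]])
  have sP: "transpose P = P" and sHi: "transpose Hi = Hi"
    unfolding Hi_def using pd_mat_symmetric pd_mat_matrix_inv P(2) H(2) by blast+
  have "precond_obj M H = trace (P ** P ** Hi) + trace H"
    using P(3) pd_matrix_inv_symmetric_elements[OF H] unfolding precond_stationary_def Hi_def
    by (simp add: precond_obj_eq_trace pd_mat_symmetric[OF M])
  moreover have "precond_obj M P = trace P + trace P"
    using P(3) pd_matrix_inv_symmetric_elements[OF P(1,2)] unfolding precond_stationary_def
    by (simp add: precond_obj_eq_trace pd_mat_symmetric[OF M] PPi flip: matrix_mul_assoc)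
  moreover have "trace (transpose Y ** (H ** Y)) = trace (P ** Hi ** P) - trace P - trace P + trace H"
  proof -
    have "transpose Y = P ** Hi - mat 1" "H ** Y = P - H"
      unfolding Y_def Hi_def[symmetric]
      by (simp_all add: transpose_diff matrix_transpose_mul sP sHi matrix_diff_ldistrib
          matrix_mul_assoc HHi)
    then have "transpose Y ** (H ** Y) = P ** Hi ** P - P - P + H"
      by (simp add: matrix_diff_ldistrib matrix_diff_rdistrib HHi flip: matrix_mul_assoc)
    then show ?thesis by (simp only: trace_add trace_sub)
  qed
  moreover have "trace (P ** Hi ** P) = trace (P ** P ** Hi)"
    by (metis matrix_mul_assoc trace_mul_sym)
  ultimately show ?thesis by linarith
qed

lemma precond_stationary_imp_min:
  assumes "pd_mat M" and P: "P \<in> K" "pd_mat P" "precond_stationary K M P"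
    and H: "H \<in> K" "pd_mat H"
  shows "precond_obj M P \<le> precond_obj M H"
    and "precond_obj M H \<le> precond_obj M P \<Longrightarrow> H = P"
proof -
  define Y where "Y = matrix_inv H ** P - mat 1"
  note diff = precond_obj_diff_eq[OF assms, folded Y_def]
  show "precond_obj M P \<le> precond_obj M H"
    using pd_trace_congruence_nonneg[OF H(2), of Y] diff by simp
  assume "precond_obj M H \<le> precond_obj M P"
  then have "Y = 0"
    using pd_trace_congruence_nonneg[OF H(2), of Y] diff by (intro pd_trace_congruence_eq_0[OF H(2)]) simp
  then have "H ** (matrix_inv H ** P) = H" unfolding Y_def by simp
  then show "H = P"
    by (simp add: matrix_mul_assoc matrix_inv_right pd_mat_invertible[OF H(2)])
qed

lemma P_H_eqI:
  assumes "\<H> = {A. psd_mat A} \<inter> K" "pd_mat M" "P \<in> K" "pd_mat P" "precond_stationary K M P"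
  shows "P_H \<H> M = P"
  unfolding P_H_def
proof (rule the_equality)
  show "P \<in> \<H> \<and> pd_mat P \<and> (\<forall>G\<in>\<H>. pd_mat G \<longrightarrow> precond_obj M P \<le> precond_obj M G)"
    using precond_stationary_imp_min(1)[OF assms(2-5)] assms(1,3,4) pd_imp_psd_mat by blast
  show "H = P" if "H \<in> \<H> \<and> pd_mat H \<and> (\<forall>G\<in>\<H>. pd_mat G \<longrightarrow> precond_obj M H \<le> precond_obj M G)" for H
    using precond_stationary_imp_min(2)[OF assms(2-5)] that assms(1,3,4) pd_imp_psd_mat by blast
qed

text \<open>Coercivity: on a sublevel set of the objective both \<open>tr H\<close> and \<open>tr H\<inverse>\<close> are bounded, so
  minimise \<open>tr H + tr (M W)\<close> over the compact set of pairs \<open>(H, W)\<close> with \<open>H W = 1\<close>.\<close>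
lemma precond_obj_attains_min_on_sublevel:
  assumes M: "pd_mat M" and H\<^sub>0: "H\<^sub>0 \<in> K" "pd_mat H\<^sub>0" "precond_obj M H\<^sub>0 \<le> c"
  obtains P where "P \<in> K" "pd_mat P"
    "\<forall>H\<in>K. pd_mat H \<longrightarrow> precond_obj M H \<le> c \<longrightarrow> precond_obj M P \<le> precond_obj M H"
proof -
  obtain m where m: "0 < m" "\<forall>x. m * (x \<bullet> x) \<le> x \<bullet> (M *v x)"
    using pd_mat_quadratic_form_lower_bound[OF M] by blast
  define C where "C = ((symmetric_elements K \<inter> {A. psd_mat A \<and> trace A \<le> c})
      \<times> {W. psd_mat W \<and> trace W \<le> c / m}) \<inter> {p. fst p ** snd p = mat 1}"
  define g where "g p = trace (fst p) + trace (M ** snd p)" for p :: "(real^'n^'n) \<times> (real^'n^'n)"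
  have "compact C"
    unfolding C_def
    by (intro compact_Int_closed compact_Times closed_Int_compact closed_symmetric_elements
        compact_psd_mat_trace_le closed_Collect_eq continuous_on_matrix_mult_pair continuous_on_const)
  have in_C: "(H, matrix_inv H) \<in> C" if "H \<in> K" "pd_mat H" "precond_obj M H \<le> c" for H
    using that precond_obj_sublevel_trace_le[OF M m(2) that(2,3)] m(1)
    unfolding C_def symmetric_elements_def
    by (simp add: pd_imp_psd_mat pd_mat_symmetric pd_mat_matrix_inv pd_mat_invertible
        matrix_inv_right pos_le_divide_eq mult.commute)
  have g_eq: "g (H, matrix_inv H) = precond_obj M H" for H
    unfolding g_def precond_obj_eq_trace[OF pd_mat_symmetric[OF M]] by simp
  have "continuous_on C g" unfolding g_def trace_def matrix_matrix_mult_def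
    by (intro continuous_intros)
  then obtain p where p: "p \<in> C" "\<forall>q\<in>C. g p \<le> g q"
    using continuous_attains_inf[OF \<open>compact C\<close>] in_C[OF H\<^sub>0] by blast
  define P where "P = fst p"
  have "P \<in> K" "psd_mat P" "P ** snd p = mat 1"
    using p(1) unfolding C_def P_def symmetric_elements_def by auto
  then have "invertible P" "matrix_inv P = snd p"
    using invertible_right_inverse matrix_inv_unique by blast+
  then have "pd_mat P" "p = (P, matrix_inv P)"
    using psd_invertible_imp_pd_mat \<open>psd_mat P\<close> unfolding P_def by auto
  show ?thesis
    using that \<open>P \<in> K\<close> \<open>pd_mat P\<close> p(2) in_C g_eq \<open>p = (P, matrix_inv P)\<close> by metis
qed

lemma precond_obj_attains_min:
  assumes M: "pd_mat M"
  obtains P where "P \<in> K" "pd_mat P" "\<forall>H\<in>K. pd_mat H \<longrightarrow> precond_obj M P \<le> precond_obj M H"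
proof -
  obtain P where P: "P \<in> K" "pd_mat P" and
    min: "\<forall>H\<in>K. pd_mat H \<longrightarrow> precond_obj M H \<le> precond_obj M (mat 1) \<longrightarrow> precond_obj M P \<le> precond_obj M H"
    using precond_obj_attains_min_on_sublevel[OF M matrix_algebra_one pd_mat_mat_1 order_refl] by blast
  then have "precond_obj M P \<le> precond_obj M (mat 1)" using matrix_algebra_one pd_mat_mat_1 by blast
  then have "precond_obj M P \<le> precond_obj M H" if "H \<in> K" "pd_mat H" for H
    using min that by (cases "precond_obj M H \<le> precond_obj M (mat 1)") auto
  then show ?thesis using that P by blast
qed

lemma precond_min_directional_derivative:
  assumes M: "pd_mat M" and P: "P \<in> K" "pd_mat P"
    and min: "\<forall>H\<in>K. pd_mat H \<longrightarrow> precond_obj M P \<le> precond_obj M H"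
    and G: "G \<in> symmetric_elements K"
  shows "trace G = trace (M ** matrix_inv P ** G ** matrix_inv P)"
proof -
  have "G \<in> K" "transpose G = G" using G unfolding symmetric_elements_def by auto
  obtain a where a: "0 < a" "\<forall>x. a * (x \<bullet> x) \<le> x \<bullet> (P *v x)"
    using pd_mat_quadratic_form_lower_bound[OF P(2)] by blast
  obtain B where B: "0 \<le> B" "\<forall>x. \<bar>x \<bullet> (G *v x)\<bar> \<le> B * (x \<bullet> x)"
    using matrix_quadratic_form_bound by blast
  define c where "c = a / 2"
  have "0 < c" unfolding c_def using a(1) by simp
  define \<delta> where "\<delta> = c / (B + 1)"
  define A where "A = transpose (matrix_inv P ** G) ** M ** (matrix_inv P ** G)"
  have "psd_mat A" unfolding A_def by (rule psd_mat_congruence[OF pd_imp_psd_mat[OF M]])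
  have "0 \<le> t * (trace G - trace (M ** matrix_inv P ** G ** matrix_inv P)) + t\<^sup>2 * (trace A / c)"
    if "\<bar>t\<bar> \<le> \<delta>" for t
  proof -
    define H where "H = P + t *\<^sub>R G"
    have "\<bar>t\<bar> * B \<le> \<delta> * (B + 1)" using that B(1) by (intro mult_mono) auto
    also have "\<dots> = c" unfolding \<delta>_def using B(1) by simp
    also have "\<dots> = a - c" unfolding c_def by simp
    finally have H_lower: "\<forall>x. c * (x \<bullet> x) \<le> x \<bullet> (H *v x)"
      unfolding H_def using quadratic_form_perturbation_lower_bound[OF a(2) B(2)] by blast
    have "pd_mat H"
      using pd_mat_of_lower_bound[OF _ \<open>0 < c\<close> H_lower] pd_mat_symmetric[OF P(2)] \<open>transpose G = G\<close>
      unfolding H_def by (simp add: transpose_add transpose_scalar)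
    moreover have "H \<in> K"
      unfolding H_def by (intro matrix_algebra_add matrix_algebra_scaleR P(1) \<open>G \<in> K\<close>)
    ultimately have "precond_obj M P \<le> precond_obj M H" using min by blast
    also have "\<dots> \<le> precond_obj M P + t * (trace G - trace (M ** matrix_inv P ** G ** matrix_inv P))
        + t\<^sup>2 * (trace A / c)"
      unfolding A_def
      by (rule precond_obj_perturbation_le[OF M P(2) \<open>transpose G = G\<close> H_def \<open>pd_mat H\<close> \<open>0 < c\<close> H_lower])
    finally show ?thesis by simp
  qed
  moreover have "0 < \<delta>" "0 \<le> trace A / c"
    unfolding \<delta>_def using \<open>0 < c\<close> B(1) psd_mat_trace_nonneg[OF \<open>psd_mat A\<close>] by simp_all
  ultimately show ?thesis using quadratic_lower_bound_imp_linear_coeff_eq_0 by fastforce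
qed

lemma precond_min_imp_stationary:
  assumes M: "pd_mat M" and P: "P \<in> K" "pd_mat P"
    and min: "\<forall>H\<in>K. pd_mat H \<longrightarrow> precond_obj M P \<le> precond_obj M H"
  shows "precond_stationary K M P"
  unfolding precond_stationary_def
proof
  fix X assume X: "X \<in> symmetric_elements K"
  have PPi: "P ** matrix_inv P = mat 1" "matrix_inv P ** P = mat 1"
    using matrix_inv_right matrix_inv_left pd_mat_invertible[OF P(2)] by auto
  have sP: "transpose P = P" by (rule pd_mat_symmetric[OF P(2)])
  have "P ** X ** P \<in> symmetric_elements K"
    using X matrix_algebra_mult[OF matrix_algebra_mult[OF P(1)] P(1)]
    unfolding symmetric_elements_def by (simp add: matrix_transpose_mul sP matrix_mul_assoc)
  from precond_min_directional_derivative[OF M P min this]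
  have "trace (P ** X ** P) = trace (M ** X)"
    by (simp add: matrix_mul_assoc PPi) (simp add: PPi flip: matrix_mul_assoc)
  then show "trace (M ** X) = trace (P ** P ** X)"
    by (metis matrix_mul_assoc trace_mul_sym)
qed

lemma P_H_stationary:
  assumes "\<H> = {A. psd_mat A} \<inter> K" "pd_mat M"
  shows "P_H \<H> M \<in> K" "pd_mat (P_H \<H> M)" "precond_stationary K M (P_H \<H> M)"
proof -
  obtain P where P: "P \<in> K" "pd_mat P" "\<forall>H\<in>K. pd_mat H \<longrightarrow> precond_obj M P \<le> precond_obj M H"
    using precond_obj_attains_min[OF assms(2)] by blast
  have stationary: "precond_stationary K M P" by (rule precond_min_imp_stationary[OF assms(2) P])
  moreover have "P_H \<H> M = P" by (rule P_H_eqI[OF assms P(1,2) stationary])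
  ultimately show "P_H \<H> M \<in> K" "pd_mat (P_H \<H> M)" "precond_stationary K M (P_H \<H> M)"
    using P by simp_all
qed

lemma precond_stationary_shift:
  assumes "precond_stationary K M P" "precond_stationary K (M + c *\<^sub>R mat 1) R"
    and "P \<in> K" "transpose P = P" "R \<in> K" "transpose R = R"
  shows "R ** R = P ** P + c *\<^sub>R mat 1"
proof -
  define X where "X = R ** R - P ** P - c *\<^sub>R mat 1"
  have "X \<in> symmetric_elements K"
    using assms(3-6) unfolding X_def symmetric_elements_def
    by (simp add: matrix_algebra_diff matrix_algebra_mult matrix_algebra_scaleR
        matrix_algebra_one transpose_diff transpose_scalar matrix_transpose_mul)
  then have "trace (R ** R ** X) = trace (P ** P ** X) + c * trace X"
    using assms(1,2) unfolding precond_stationary_def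
    by (simp add: matrix_add_rdistrib matrix_mult_scaleR_left trace_add trace_scaleR)
  then have "trace (X ** X) = 0"
    unfolding X_def by (simp add: matrix_diff_rdistrib matrix_mult_scaleR_left trace_sub trace_scaleR)
  then have "X = 0"
    using \<open>X \<in> symmetric_elements K\<close> symmetric_trace_square_eq_0
    unfolding symmetric_elements_def by blast
  then show ?thesis unfolding X_def by (simp add: algebra_simps)
qed

end

theorem lemmaA2:
  fixes \<H> :: "(real^'n^'n) set" and M :: "real^'n^'n"
  assumes "well_structured \<H>" and "pd_mat M"
  shows "(\<forall>H\<in>\<H>. frob M H = frob (P_H \<H> M ** P_H \<H> M) H) \<and>
         (\<forall>lam::real. lam \<ge> 0 \<longrightarrow>
            P_H \<H> (M + lam *\<^sub>R mat 1) ** P_H \<H> (M + lam *\<^sub>R mat 1)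
              = P_H \<H> M ** P_H \<H> M + lam *\<^sub>R mat 1)"
proof (intro conjI ballI allI impI)
  obtain K where K: "matrix_algebra K" and \<H>: "\<H> = {A. psd_mat A} \<inter> K"
    using assms(1) unfolding well_structured_iff_matrix_algebra by blast
  define P where "P = P_H \<H> M"
  note P = P_H_stationary[OF K \<H> assms(2), folded P_def]
  show "frob M H = frob (P ** P) H" if "H \<in> \<H>" for H
  proof -
    have "H \<in> symmetric_elements K"
      using that psd_mat_symmetric unfolding \<H> symmetric_elements_def by blast
    then show ?thesis
      using P(3) pd_mat_symmetric[OF assms(2)] pd_mat_symmetric[OF P(2)]
      unfolding precond_stationary_def frob_def by (simp add: matrix_transpose_mul)
  qed
  show "P_H \<H> (M + lam *\<^sub>R mat 1) ** P_H \<H> (M + lam *\<^sub>R mat 1) = P ** P + lam *\<^sub>R mat 1"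
    if "0 \<le> lam" for lam
    using P_H_stationary[OF K \<H> pd_mat_add_scaleR_mat_1[OF assms(2) that]] P
    by (intro precond_stationary_shift[OF K]) (simp_all add: pd_mat_symmetric)
qed

end
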